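(* Let $n\ge d\ge 2$ and let $\mathcal{C}_{n,d}$ be the complete $d$-uniform clutter on $[n]$. Then $\mathcal{C}_{n,d}$ is chordal and its $\lambda$-sequence is \[ \lambda_i(\mathcal{C}_{n,d})=\begin{cases}\binom{n-1-i}{d-2}, & i=1,\ldots,n-d+1,\\ 0, & \text{otherwise.}\end{cases} \]
   Context: $\mathcal{C}_{n,d}$ is the set of all $d$-subsets of $[n]$. For a $d$-uniform clutter $\mathcal{C}$ (set of $d$-subsets of $[n]$): a submaximal circuit is a $(d-1)$-set contained in some circuit; a clique is a set all of whose $d$-subsets are in $\mathcal{C}$; $\mathrm{N}_{\mathcal{C}}(e)=\{c: e\cup\{c\}\in\mathcal{C}\}$, $\mathrm{N}_{\mathcal{C}}[e]=e\cup\mathrm{N}_{\mathcal{C}}(e)$; $e$ is simplicial if it is a submaximal circuit and $\mathrm{N}_{\mathcal{C}}[e]$ is a clique. $\mathcal{C}\setminus e=\{F\in\mathcal{C}:e\not\subset F\}$; $\mathcal{C}_{e_1\cdots e_i}$ is successive deletion. A simplicial order is a sequence $e_1,\ldots,e_r$ with $e_i$ simplicial in $\mathcal{C}_{e_1\cdots e_{i-1}}$ (in $\mathcal{C}$ for $i=1$) and $\mathcal{C}_{e_1\cdots e_r}=\emptyset$; $\mathcal{C}$ is chordal if one exists. Its multiset is $\{N_1,\ldots,N_r\}$, $N_i=|\mathrm{N}_{\mathcal{C}_{e_1\cdots e_{i-1}}}(e_i)|$ (independent of the order), and $\lambda_i(\mathcal{C})=|\{j:N_j=i\}|$. *)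

theory Defs
  imports Main
begin

definition complete_clutter :: "nat \<Rightarrow> nat \<Rightarrow> nat set set" where
  "complete_clutter n d = {F. F \<subseteq> {1..n} \<and> card F = d}"

definition submaximal_circuit :: "nat \<Rightarrow> nat set set \<Rightarrow> nat set \<Rightarrow> bool" where
  "submaximal_circuit d C e \<longleftrightarrow> finite e \<and> card e = d - 1 \<and> (\<exists>F\<in>C. e \<subseteq> F)"

definition is_clique :: "nat \<Rightarrow> nat set set \<Rightarrow> nat set \<Rightarrow> bool" where
  "is_clique d C S \<longleftrightarrow> (\<forall>F. F \<subseteq> S \<and> finite F \<and> card F = d \<longrightarrow> F \<in> C)"

definition nbhd :: "nat set set \<Rightarrow> nat set \<Rightarrow> nat set" where
  "nbhd C e = {c. e \<union> {c} \<in> C}"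

definition closed_nbhd :: "nat set set \<Rightarrow> nat set \<Rightarrow> nat set" where
  "closed_nbhd C e = e \<union> nbhd C e"

definition simplicial :: "nat \<Rightarrow> nat set set \<Rightarrow> nat set \<Rightarrow> bool" where
  "simplicial d C e \<longleftrightarrow> submaximal_circuit d C e \<and> is_clique d C (closed_nbhd C e)"

definition del :: "nat set set \<Rightarrow> nat set \<Rightarrow> nat set set" where
  "del C e = {F\<in>C. \<not> e \<subseteq> F}"

definition dels :: "nat set set \<Rightarrow> nat set list \<Rightarrow> nat set set" where
  "dels C es = foldl del C es"

definition simplicial_order :: "nat \<Rightarrow> nat set set \<Rightarrow> nat set list \<Rightarrow> bool" where
  "simplicial_order d C es \<longleftrightarrow>
     (\<forall>i < length es. simplicial d (dels C (take i es)) (es ! i)) \<and> dels C es = {}"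

definition chordal :: "nat \<Rightarrow> nat set set \<Rightarrow> bool" where
  "chordal d C \<longleftrightarrow> (\<exists>es. simplicial_order d C es)"

text \<open>N_j of the order (0-indexed j), and lambda_i with respect to the order.\<close>
definition order_N :: "nat set set \<Rightarrow> nat set list \<Rightarrow> nat \<Rightarrow> nat" where
  "order_N C es j = card (nbhd (dels C (take j es)) (es ! j))"

definition lambda_seq :: "nat set set \<Rightarrow> nat set list \<Rightarrow> nat \<Rightarrow> nat" where
  "lambda_seq C es i = card {j. j < length es \<and> order_N C es j = i}"

end

theory Submission imports Defs begin

text \<open>
For a d-uniform clutter with a simplicial order \<open>e\<^sub>1, \<dots>, e\<^sub>r\<close>, deleting a simplicial \<open>e\<close>
destroys exactly the m-cliques containing \<open>e\<close>, which are \<open>e \<union> T\<close> with \<open>T\<close> an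
\<open>(m-d+1)\<close>-subset of \<open>N(e)\<close>. Hence the number of m-cliques is \<open>\<Sum>\<^sub>j (N\<^sub>j choose m-d+1)\<close>,
i.e. \<open>\<Sum>\<^sub>i \<lambda>\<^sub>i (i choose t)\<close> with \<open>t = m-d+1\<close>. This triangular system determines \<open>\<lambda>\<close>, so
for the complete clutter, whose m-cliques number \<open>n choose m\<close>, it suffices to check the
claimed values against an upper Vandermonde identity.

A simplicial order of the complete clutter deletes the \<open>(d-1)\<close>-subsets of \<open>{2..n}\<close> by
decreasing minimum: when \<open>y\<close> is deleted, its neighbourhood is exactly \<open>{1..<Min y}\<close>.
\<close>

lemma sum_choose_mult_choose_diff:
  "(\<Sum>k\<le>N. (k choose a) * ((N - k) choose b)) = Suc N choose (a + b + 1)"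
proof (induction N arbitrary: b)
  case 0
  then show ?case by (cases a; cases b) auto
next
  case (Suc N)
  show ?case
  proof (cases b)
    case 0
    then show ?thesis using sum_choose_upper[where n="Suc N" and m=a] by simp
  next
    case (Suc b')
    have "(\<Sum>k\<le>Suc N. (k choose a) * ((Suc N - k) choose b))
        = (\<Sum>k\<le>N. (k choose a) * ((Suc N - k) choose b))" using Suc by simp
    also have "\<dots> = (\<Sum>k\<le>N. (k choose a) * ((N - k) choose b') + (k choose a) * ((N - k) choose b))"
      by (rule sum.cong) (auto simp: Suc Suc_diff_le algebra_simps)
    also have "\<dots> = (Suc N choose (a + b' + 1)) + (Suc N choose (a + b + 1))"
      using Suc.IH[of b'] Suc.IH[of b] by (simp add: sum.distrib)
    also have "\<dots> = Suc (Suc N) choose (a + b + 1)" using Suc by simp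
    finally show ?thesis .
  qed
qed

lemma binomial_moments_determine:
  fixes l u :: "nat \<Rightarrow> nat"
  assumes "\<And>t. t \<in> {1..n} \<Longrightarrow>
    (\<Sum>i\<in>{1..n}. l i * (i choose t)) = (\<Sum>i\<in>{1..n}. u i * (i choose t))"
    and "i \<in> {1..n}"
  shows "l i = u i"
proof (rule ccontr)
  define B where "B = {i\<in>{1..n}. l i \<noteq> u i}"
  assume "l i \<noteq> u i"
  then have B: "B \<noteq> {}" "finite B" using assms(2) by (auto simp: B_def)
  define t where "t = Max B"
  have tB: "t \<in> B" and tmax: "\<And>i. i \<in> B \<Longrightarrow> i \<le> t" using B by (simp_all add: t_def)
  then have tn: "t \<in> {1..n}" by (simp add: B_def)
  \<comment> \<open>below \<open>t\<close> the binomial coefficient vanishes, above \<open>t\<close> the sequences agree\<close>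
  have rest: "(\<Sum>i\<in>{1..n}-{t}. l i * (i choose t)) = (\<Sum>i\<in>{1..n}-{t}. u i * (i choose t))"
  proof (rule sum.cong)
    fix i assume i: "i \<in> {1..n}-{t}"
    show "l i * (i choose t) = u i * (i choose t)"
    proof (cases "i < t")
      case False
      then have "i \<notin> B" using tmax i by force
      then show ?thesis using i by (simp add: B_def)
    qed simp
  qed simp
  have "l t + (\<Sum>i\<in>{1..n}-{t}. l i * (i choose t)) = u t + (\<Sum>i\<in>{1..n}-{t}. u i * (i choose t))"
    using assms(1)[OF tn] sum.remove[of "{1..n}" t "\<lambda>i. l i * (i choose t)"]
      sum.remove[of "{1..n}" t "\<lambda>i. u i * (i choose t)"] tn by simp
  then show False using rest tB by (simp add: B_def)
qed

lemma complete_lambda_binomial_moment: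
  assumes "2 \<le> d" "d \<le> n" "1 \<le> t"
  shows "(\<Sum>i\<in>{1..n}. (if 1 \<le> i \<and> i \<le> n - d + 1 then (n - 1 - i) choose (d - 2) else 0)
            * (i choose t)) = n choose (d - 1 + t)"
proof -
  have "(\<Sum>i\<in>{1..n}. (if 1 \<le> i \<and> i \<le> n - d + 1 then (n - 1 - i) choose (d - 2) else 0)
            * (i choose t))
      = (\<Sum>i\<in>{1..n}. if i < n then (i choose t) * ((n - 1 - i) choose (d - 2)) else 0)"
  proof (rule sum.cong)
    fix i assume i: "i \<in> {1..n}"
    show "(if 1 \<le> i \<and> i \<le> n - d + 1 then (n - 1 - i) choose (d - 2) else 0) * (i choose t) =
          (if i < n then (i choose t) * ((n - 1 - i) choose (d - 2)) else 0)"
    proof (cases "i \<le> n - d + 1")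
      case False
      then have "i < n \<Longrightarrow> n - 1 - i < d - 2" using assms by linarith
      then show ?thesis using i False by auto
    qed (use i assms in auto)
  qed simp
  also have "\<dots> = (\<Sum>i\<in>{1..n-1}. (i choose t) * ((n - 1 - i) choose (d - 2)))"
    by (rule sum.mono_neutral_cong_right) (use assms in auto)
  also have "\<dots> = (\<Sum>i\<le>n - 1. (i choose t) * ((n - 1 - i) choose (d - 2)))"
    by (rule sum.mono_neutral_cong_left) (use assms in auto)
  also have "\<dots> = Suc (n - 1) choose (t + (d - 2) + 1)"
    by (rule sum_choose_mult_choose_diff)
  also have "\<dots> = n choose (d - 1 + t)"
  proof -
    have "Suc (n - 1) = n" "t + (d - 2) + 1 = d - 1 + t" using assms by auto
    then show ?thesis by (simp only:)
  qed
  finally show ?thesis .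
qed

lemma dels_Nil [simp]: "dels C [] = C"
  by (simp add: dels_def)

lemma dels_Cons [simp]: "dels C (e # es) = dels (del C e) es"
  by (simp add: dels_def)

lemma dels_subset: "dels C es \<subseteq> C"
  by (induction es arbitrary: C) (auto simp: del_def)

lemma simplicial_order_Nil_iff: "simplicial_order d C [] \<longleftrightarrow> C = {}"
  by (simp add: simplicial_order_def)

lemma simplicial_order_Cons_iff:
  "simplicial_order d C (e # es) \<longleftrightarrow> simplicial d C e \<and> simplicial_order d (del C e) es"
  unfolding simplicial_order_def by (simp add: All_less_Suc2)

lemma order_N_Cons_0: "order_N C (e # es) 0 = card (nbhd C e)"
  by (simp add: order_N_def)

lemma order_N_Cons_Suc: "order_N C (e # es) (Suc j) = order_N (del C e) es j"
  by (simp add: order_N_def)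

lemma nbhd_subset_ground: "C \<subseteq> complete_clutter n d \<Longrightarrow> nbhd C e \<subseteq> {1..n}"
  by (auto simp: nbhd_def complete_clutter_def)

lemma nbhd_disjoint:
  assumes "C \<subseteq> complete_clutter n d" "card e = d - 1" "1 \<le> d"
  shows "e \<inter> nbhd C e = {}"
proof -
  have "e \<notin> C" using assms by (auto simp: complete_clutter_def)
  then show ?thesis by (auto simp: nbhd_def insert_absorb)
qed

lemma card_nbhd_submaximal_circuit:
  assumes C: "C \<subseteq> complete_clutter n d" and "1 \<le> d" and "submaximal_circuit d C e"
  shows "card (nbhd C e) \<in> {1..n}"
proof -
  obtain F where F: "F \<in> C" "e \<subseteq> F" and e: "finite e" "card e = d - 1"
    using assms(3) by (auto simp: submaximal_circuit_def)
  have "F \<subseteq> {1..n}" "card F = d" using F C by (auto simp: complete_clutter_def)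
  then have "finite F" using finite_subset by blast
  then have "e \<noteq> F" using e \<open>card F = d\<close> \<open>1 \<le> d\<close> by auto
  then obtain x where x: "x \<in> F" "x \<notin> e" using F(2) by blast
  then have "insert x e \<subseteq> F" "card (insert x e) = card F"
    using F(2) e \<open>card F = d\<close> \<open>1 \<le> d\<close> by auto
  then have "insert x e = F" using card_subset_eq[OF \<open>finite F\<close>] by blast
  then have "nbhd C e \<noteq> {}" using F(1) by (auto simp: nbhd_def)
  moreover have "finite (nbhd C e)" using nbhd_subset_ground[OF C] finite_subset by blast
  moreover have "card (nbhd C e) \<le> n" using card_mono[OF _ nbhd_subset_ground[OF C]] by simp
  ultimately show ?thesis by (auto simp: card_gt_0_iff Suc_le_eq)
qed

definition cliques :: "nat \<Rightarrow> nat set set \<Rightarrow> nat \<Rightarrow> nat set set" where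
  "cliques d C m = {K. finite K \<and> card K = m \<and> is_clique d C K}"

lemma clique_subset_ground:
  assumes "C \<subseteq> complete_clutter n d" "1 \<le> d" "d \<le> card K" "finite K" "is_clique d C K"
  shows "K \<subseteq> {1..n}"
proof
  fix x assume x: "x \<in> K"
  have "d - 1 \<le> card (K - {x})" using x assms by simp
  then obtain T where T: "T \<subseteq> K - {x}" "card T = d - 1" "finite T"
    by (rule obtain_subset_with_card_n)
  moreover have "x \<notin> T" using T(1) by blast
  ultimately have "insert x T \<subseteq> K" "finite (insert x T)" "card (insert x T) = d"
    using x assms(2) by auto
  then have "insert x T \<in> C" using assms(5) by (simp add: is_clique_def)
  then show "x \<in> {1..n}" using assms(1) by (auto simp: complete_clutter_def)
qed

lemma finite_cliques:
  assumes "C \<subseteq> complete_clutter n d" "1 \<le> d" "d \<le> m"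
  shows "finite (cliques d C m)"
proof (rule finite_subset)
  show "cliques d C m \<subseteq> Pow {1..n}"
    using clique_subset_ground[OF assms(1,2)] assms(3) by (auto simp: cliques_def)
qed simp

lemma cliques_empty_clutter:
  assumes "d \<le> m"
  shows "cliques d {} m = {}"
proof -
  have False if "finite K" "card K = m" "is_clique d {} K" for K
  proof -
    have "d \<le> card K" using that(2) assms by simp
    then obtain F where "F \<subseteq> K" "card F = d" "finite F"
      by (rule obtain_subset_with_card_n)
    then show False using that(3) by (auto simp: is_clique_def)
  qed
  then show ?thesis by (auto simp: cliques_def)
qed

lemma card_cliques_complete_clutter:
  assumes "1 \<le> d" "d \<le> m"
  shows "card (cliques d (complete_clutter n d) m) = n choose m"
proof -
  have "cliques d (complete_clutter n d) m = {K. K \<subseteq> {1..n} \<and> card K = m}"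
    using clique_subset_ground[of "complete_clutter n d" n d] assms
    by (auto simp: cliques_def is_clique_def complete_clutter_def intro: finite_subset)
  then show ?thesis using n_subsets[of "{1..n}" m] by simp
qed

lemma cliques_del:
  assumes "finite e" "card e = d - 1" "1 \<le> d" "d \<le> m"
  shows "cliques d (del C e) m = {K \<in> cliques d C m. \<not> e \<subseteq> K}"
proof -
  have "\<not> e \<subseteq> K" if K: "finite K" "card K = m" "is_clique d (del C e) K" for K
  proof
    assume eK: "e \<subseteq> K"
    have "card e < card K" using K(2) assms by simp
    then have "K \<noteq> e" by auto
    then obtain x where x: "x \<in> K" "x \<notin> e" using eK by blast
    then have "insert x e \<subseteq> K" "finite (insert x e)" "card (insert x e) = d"
      using eK assms by auto
    then have "insert x e \<in> del C e" using K(3) by (simp add: is_clique_def)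
    then show False by (auto simp: del_def)
  qed
  then show ?thesis by (auto simp: cliques_def is_clique_def del_def)
qed

lemma cliques_containing_simplicial:
  assumes C: "C \<subseteq> complete_clutter n d" and "1 \<le> d" "d \<le> m" and s: "simplicial d C e"
  shows "{K \<in> cliques d C m. e \<subseteq> K} = (\<union>) e ` {T. T \<subseteq> nbhd C e \<and> card T = m - d + 1}"
proof -
  have e: "finite e" "card e = d - 1" and cl: "is_clique d C (closed_nbhd C e)"
    using s by (auto simp: simplicial_def submaximal_circuit_def)
  have disj: "e \<inter> nbhd C e = {}" using nbhd_disjoint[OF C e(2) \<open>1 \<le> d\<close>] .
  have fin: "finite (nbhd C e)" using nbhd_subset_ground[OF C] finite_subset by blast
  show ?thesis
  proof (intro equalityI subsetI)
    fix K assume "K \<in> {K \<in> cliques d C m. e \<subseteq> K}"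
    then have K: "finite K" "card K = m" "is_clique d C K" "e \<subseteq> K"
      by (auto simp: cliques_def)
    have "K - e \<subseteq> nbhd C e"
    proof
      fix c assume c: "c \<in> K - e"
      then have "e \<union> {c} \<subseteq> K" "finite (e \<union> {c})" "card (e \<union> {c}) = d"
        using K e \<open>1 \<le> d\<close> by auto
      then show "c \<in> nbhd C e" using K(3) by (simp add: is_clique_def nbhd_def)
    qed
    moreover have "card (K - e) = m - d + 1"
      using K e assms(2,3) by (simp add: card_Diff_subset)
    moreover have "K = e \<union> (K - e)" using K by blast
    ultimately show "K \<in> (\<union>) e ` {T. T \<subseteq> nbhd C e \<and> card T = m - d + 1}" by blast
  next
    fix K assume "K \<in> (\<union>) e ` {T. T \<subseteq> nbhd C e \<and> card T = m - d + 1}"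
    then obtain T where T: "T \<subseteq> nbhd C e" "card T = m - d + 1" "K = e \<union> T" by auto
    have "finite T" using T fin finite_subset by blast
    moreover have "card K = m"
    proof -
      have "e \<inter> T = {}" using disj T(1) by blast
      then have "card K = card e + card T" using T(3) e(1) \<open>finite T\<close> by (simp add: card_Un_disjoint)
      then show ?thesis using T(2) e(2) assms(2,3) by simp
    qed
    moreover have "is_clique d C K"
      using cl T unfolding is_clique_def closed_nbhd_def by blast
    ultimately show "K \<in> {K \<in> cliques d C m. e \<subseteq> K}" using T e by (simp add: cliques_def)
  qed
qed

lemma card_cliques_del_simplicial:
  assumes C: "C \<subseteq> complete_clutter n d" and "1 \<le> d" "d \<le> m" and s: "simplicial d C e"
  shows "card (cliques d C m) = card (cliques d (del C e) m) + (card (nbhd C e) choose (m - d + 1))"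
proof -
  let ?A = "cliques d C m" and ?S = "{T. T \<subseteq> nbhd C e \<and> card T = m - d + 1}"
  have e: "finite e" "card e = d - 1" using s by (auto simp: simplicial_def submaximal_circuit_def)
  have "card {K \<in> ?A. e \<subseteq> K} = card ((\<union>) e ` ?S)"
    by (simp only: cliques_containing_simplicial[OF assms])
  also have "\<dots> = card ?S"
    using nbhd_disjoint[OF C e(2) \<open>1 \<le> d\<close>] by (intro card_image inj_onI) blast
  also have "\<dots> = card (nbhd C e) choose (m - d + 1)"
    by (rule n_subsets) (use nbhd_subset_ground[OF C] finite_subset in blast)
  finally have "card {K \<in> ?A. e \<subseteq> K} = card (nbhd C e) choose (m - d + 1)" .
  moreover have "card ?A = card {K \<in> ?A. e \<subseteq> K} + card {K \<in> ?A. \<not> e \<subseteq> K}"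
  proof -
    have "card ?A = card ({K \<in> ?A. e \<subseteq> K} \<union> {K \<in> ?A. \<not> e \<subseteq> K})"
      by (rule arg_cong[where f=card]) blast
    also have "\<dots> = card {K \<in> ?A. e \<subseteq> K} + card {K \<in> ?A. \<not> e \<subseteq> K}"
      by (rule card_Un_disjoint) (use finite_cliques[OF C \<open>1 \<le> d\<close> \<open>d \<le> m\<close>] in auto)
    finally show ?thesis .
  qed
  ultimately show ?thesis using cliques_del[OF e \<open>1 \<le> d\<close> \<open>d \<le> m\<close>] by simp
qed

lemma card_cliques_simplicial_order:
  assumes "C \<subseteq> complete_clutter n d" "1 \<le> d" "d \<le> m" "simplicial_order d C es"
  shows "card (cliques d C m) = (\<Sum>j<length es. order_N C es j choose (m - d + 1))"
  using assms
proof (induction es arbitrary: C)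
  case Nil
  then show ?case using cliques_empty_clutter[OF \<open>d \<le> m\<close>] by (simp add: simplicial_order_Nil_iff)
next
  case (Cons e es)
  then have "simplicial d C e" "simplicial_order d (del C e) es" "del C e \<subseteq> complete_clutter n d"
    by (auto simp: simplicial_order_Cons_iff del_def)
  then show ?case
    using card_cliques_del_simplicial[OF Cons.prems(1-3)] Cons.IH[of "del C e"] Cons.prems
    by (simp add: sum.lessThan_Suc_shift order_N_Cons_0 order_N_Cons_Suc del: sum.lessThan_Suc)
qed

lemma order_N_bounds:
  assumes "C \<subseteq> complete_clutter n d" "1 \<le> d" "simplicial_order d C es" "j < length es"
  shows "order_N C es j \<in> {1..n}"
proof -
  have "submaximal_circuit d (dels C (take j es)) (es ! j)"
    using assms(3,4) by (simp add: simplicial_order_def simplicial_def)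
  moreover have "dels C (take j es) \<subseteq> complete_clutter n d"
    using dels_subset assms(1) by blast
  ultimately show ?thesis
    using card_nbhd_submaximal_circuit \<open>1 \<le> d\<close> by (simp add: order_N_def)
qed

lemma lambda_seq_binomial_moment:
  assumes C: "C \<subseteq> complete_clutter n d" and "1 \<le> d" and es: "simplicial_order d C es"
    and "1 \<le> t"
  shows "(\<Sum>i\<in>{1..n}. lambda_seq C es i * (i choose t)) = card (cliques d C (d - 1 + t))"
proof -
  let ?N = "order_N C es" and ?J = "{..<length es}"
  have "card (cliques d C (d - 1 + t)) = (\<Sum>j\<in>?J. ?N j choose t)"
    using card_cliques_simplicial_order[OF C \<open>1 \<le> d\<close> _ es, of "d - 1 + t"] assms(2,4) by simp
  also have "\<dots> = (\<Sum>i\<in>?N ` ?J. \<Sum>j\<in>{j\<in>?J. ?N j = i}. ?N j choose t)"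
    by (rule sum.image_gen) simp
  also have "\<dots> = (\<Sum>i\<in>?N ` ?J. card {j\<in>?J. ?N j = i} * (i choose t))"
    by simp
  also have "\<dots> = (\<Sum>i\<in>{1..n}. card {j\<in>?J. ?N j = i} * (i choose t))"
    by (rule sum.mono_neutral_left) (use order_N_bounds[OF C \<open>1 \<le> d\<close> es] in auto)
  finally show ?thesis by (simp add: lambda_seq_def)
qed

lemma lambda_seq_eqI:
  assumes C: "C \<subseteq> complete_clutter n d" and "1 \<le> d" and es: "simplicial_order d C es"
    and zero: "\<And>i. i \<notin> {1..n} \<Longrightarrow> \<mu> i = 0"
    and moments: "\<And>t. t \<in> {1..n} \<Longrightarrow>
      (\<Sum>i\<in>{1..n}. \<mu> i * (i choose t)) = card (cliques d C (d - 1 + t))"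
  shows "lambda_seq C es i = \<mu> i"
proof (cases "i \<in> {1..n}")
  case True
  then show ?thesis
    using binomial_moments_determine[of n "lambda_seq C es" \<mu>]
      lambda_seq_binomial_moment[OF C \<open>1 \<le> d\<close> es] moments by force
next
  case False
  then have "{j. j < length es \<and> order_N C es j = i} = {}"
    using order_N_bounds[OF C \<open>1 \<le> d\<close> es] by auto
  then show ?thesis using False zero by (simp add: lambda_seq_def)
qed

definition base_ridges :: "nat \<Rightarrow> nat \<Rightarrow> nat set set" where
  "base_ridges n d = {e. e \<subseteq> {2..n} \<and> card e = d - 1}"

definition avoiding :: "nat \<Rightarrow> nat \<Rightarrow> nat set set \<Rightarrow> nat set set" where
  "avoiding n d X = {F \<in> complete_clutter n d. \<forall>e\<in>X. \<not> e \<subseteq> F}"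

lemma avoiding_empty: "avoiding n d {} = complete_clutter n d"
  by (simp add: avoiding_def)

lemma avoiding_insert: "avoiding n d (insert y X) = del (avoiding n d X) y"
  by (auto simp: avoiding_def del_def)

lemma finite_base_ridges: "finite (base_ridges n d)"
  by (rule finite_subset[of _ "Pow {2..n}"]) (auto simp: base_ridges_def)

text \<open>Every d-subset of \<open>{1..n}\<close> contains a base ridge: drop its minimum.\<close>

lemma avoiding_base_ridges:
  assumes "2 \<le> d"
  shows "avoiding n d (base_ridges n d) = {}"
proof -
  have "\<exists>e\<in>base_ridges n d. e \<subseteq> F" if F: "F \<subseteq> {1..n}" "card F = d" for F
  proof -
    have "finite F" "F \<noteq> {}" using F assms finite_subset by auto
    then have "Min F \<in> F" "\<forall>x\<in>F. Min F \<le> x" by simp_all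
    then have "F - {Min F} \<subseteq> {2..n}" using F(1) by fastforce
    then have "F - {Min F} \<in> base_ridges n d"
      using F \<open>finite F\<close> \<open>Min F \<in> F\<close> by (simp add: base_ridges_def)
    then show ?thesis by blast
  qed
  then show ?thesis unfolding avoiding_def complete_clutter_def by blast
qed

text \<open>
\<open>Y\<close> is the set of base ridges not yet deleted and \<open>y \<in> Y\<close> the next one to delete; ridges
are deleted in order of decreasing minimum.
\<close>

context
  fixes n d :: nat and Y :: "nat set set" and y :: "nat set"
  assumes d: "2 \<le> d"
    and Y: "Y \<subseteq> base_ridges n d"
    and deleted_above: "\<And>y' e. y' \<in> Y \<Longrightarrow> e \<in> base_ridges n d - Y \<Longrightarrow> Min y' \<le> Min e"
    and y: "y \<in> Y" and y_max: "\<And>y'. y' \<in> Y \<Longrightarrow> Min y' \<le> Min y"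
begin

private lemma y_facts:
  "finite y" "card y = d - 1" "y \<subseteq> {2..n}" "Min y \<in> y" "\<And>x. x \<in> y \<Longrightarrow> Min y \<le> x"
proof -
  show "y \<subseteq> {2..n}" and "card y = d - 1" using y Y by (auto simp: base_ridges_def)
  then show "finite y" using finite_subset by blast
  moreover have "y \<noteq> {}" using \<open>card y = d - 1\<close> d by auto
  ultimately show "Min y \<in> y" "\<And>x. x \<in> y \<Longrightarrow> Min y \<le> x" by simp_all
qed

lemma avoiding_memI:
  assumes T: "T \<subseteq> y \<union> {1..<Min y}" "card T = d"
  shows "T \<in> avoiding n d (base_ridges n d - Y)"
proof -
  have "\<not> e \<subseteq> T" if e: "e \<in> base_ridges n d - Y" for e
  proof
    assume "e \<subseteq> T"
    have "e \<subseteq> {2..n}" "card e = d - 1" using e by (auto simp: base_ridges_def)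
    then have "finite e" "e \<noteq> {}" using d finite_subset by auto
    then have "\<forall>x\<in>e. Min y \<le> x" using deleted_above[OF y e] by (meson Min_le order_trans)
    then have "e \<subseteq> y" using \<open>e \<subseteq> T\<close> T(1) by fastforce
    then have "e = y" using \<open>card e = d - 1\<close> y_facts(1,2) by (simp add: card_subset_eq)
    then show False using e y by blast
  qed
  moreover have "T \<subseteq> {1..n}" using T(1) y_facts(3,4) by fastforce
  ultimately show ?thesis using T(2) by (simp add: avoiding_def complete_clutter_def)
qed

lemma nbhd_avoiding: "nbhd (avoiding n d (base_ridges n d - Y)) y = {1..<Min y}"
proof (intro equalityI subsetI)
  fix c assume "c \<in> {1..<Min y}"
  moreover from this have "c \<notin> y" using y_facts(5) by fastforce
  ultimately show "c \<in> nbhd (avoiding n d (base_ridges n d - Y)) y"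
    using avoiding_memI[of "y \<union> {c}"] y_facts(1,2) d by (simp add: nbhd_def)
next
  fix c assume "c \<in> nbhd (avoiding n d (base_ridges n d - Y)) y"
  then have F: "insert c y \<subseteq> {1..n}" "card (insert c y) = d"
    "\<forall>e\<in>base_ridges n d - Y. \<not> e \<subseteq> insert c y"
    by (auto simp: nbhd_def avoiding_def complete_clutter_def)
  have "c \<notin> y" using F(2) y_facts(1,2) d by (auto simp: insert_absorb)
  show "c \<in> {1..<Min y}"
  proof (rule ccontr)
    assume "c \<notin> {1..<Min y}"
    then have "Min y < c" using F(1) \<open>c \<notin> y\<close> y_facts(4) by (cases "c = Min y") auto
    \<comment> \<open>trading \<open>Min y\<close> for \<open>c\<close> gives a ridge of larger minimum, hence a deleted one\<close>
    define e where "e = insert c y - {Min y}"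
    have "finite e" "c \<in> e" using \<open>Min y < c\<close> y_facts(1) by (auto simp: e_def)
    moreover have "\<forall>x\<in>e. Min y < x" using \<open>Min y < c\<close> y_facts(5) by (force simp: e_def le_less)
    ultimately have "Min y < Min e" by (metis Min_in empty_iff)
    moreover have "e \<in> base_ridges n d"
      using F(1) \<open>c \<notin> y\<close> \<open>Min y < c\<close> y_facts by (auto simp: base_ridges_def e_def)
    ultimately have "e \<in> base_ridges n d - Y" using y_max by (meson not_le DiffI)
    moreover have "e \<subseteq> insert c y" by (auto simp: e_def)
    ultimately show False using F(3) by blast
  qed
qed

lemma simplicial_avoiding: "simplicial d (avoiding n d (base_ridges n d - Y)) y"
proof -
  let ?C = "avoiding n d (base_ridges n d - Y)"
  have "1 < Min y" using y_facts(3,4) by auto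
  then have "y \<union> {1} \<in> ?C" using nbhd_avoiding by (auto simp: nbhd_def)
  then have "submaximal_circuit d ?C y" using y_facts(1,2) by (auto simp: submaximal_circuit_def)
  moreover have "is_clique d ?C (closed_nbhd ?C y)"
    using avoiding_memI by (auto simp: is_clique_def closed_nbhd_def nbhd_avoiding)
  ultimately show ?thesis by (simp add: simplicial_def)
qed

end

lemma simplicial_order_avoiding_exists:
  assumes "2 \<le> d" "Y \<subseteq> base_ridges n d"
    and "\<And>y e. y \<in> Y \<Longrightarrow> e \<in> base_ridges n d - Y \<Longrightarrow> Min y \<le> Min e"
  shows "\<exists>es. simplicial_order d (avoiding n d (base_ridges n d - Y)) es"
  using assms(2,3)
proof (induction "card Y" arbitrary: Y)
  case 0
  moreover have "finite Y" using 0 finite_base_ridges finite_subset by blast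
  ultimately have "Y = {}" by simp
  then show ?case
    by (intro exI[of _ "[]"]) (simp add: simplicial_order_Nil_iff avoiding_base_ridges[OF assms(1)])
next
  case (Suc k)
  have "finite Y" using Suc.prems(1) finite_base_ridges finite_subset by blast
  moreover have "Y \<noteq> {}" using Suc.hyps(2) by auto
  ultimately have "Max (Min ` Y) \<in> Min ` Y" by simp
  then obtain y where y: "y \<in> Y" "Min y = Max (Min ` Y)" by auto
  then have y_max: "\<And>y'. y' \<in> Y \<Longrightarrow> Min y' \<le> Min y" using \<open>finite Y\<close> by simp
  have remove: "base_ridges n d - (Y - {y}) = insert y (base_ridges n d - Y)"
    using y Suc.prems(1) by auto
  have "\<exists>es. simplicial_order d (avoiding n d (base_ridges n d - (Y - {y}))) es"
  proof (rule Suc.hyps(1))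
    show "k = card (Y - {y})" using Suc.hyps(2) y \<open>finite Y\<close> by simp
    show "Y - {y} \<subseteq> base_ridges n d" using Suc.prems(1) by blast
    show "\<And>y' e. y' \<in> Y - {y} \<Longrightarrow> e \<in> base_ridges n d - (Y - {y}) \<Longrightarrow> Min y' \<le> Min e"
      unfolding remove using Suc.prems(2) y_max by blast
  qed
  then obtain es where "simplicial_order d (del (avoiding n d (base_ridges n d - Y)) y) es"
    by (auto simp: remove avoiding_insert)
  then have "simplicial_order d (avoiding n d (base_ridges n d - Y)) (y # es)"
    using simplicial_avoiding[OF assms(1) Suc.prems y(1) y_max] by (simp add: simplicial_order_Cons_iff)
  then show ?case ..
qed

lemma chordal_complete_clutter:
  assumes "2 \<le> d"
  shows "chordal d (complete_clutter n d)"
  using simplicial_order_avoiding_exists[OF assms, of "base_ridges n d" n]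
  by (simp add: chordal_def avoiding_empty)

theorem proposition4p7:
  fixes n d :: nat
  assumes "2 \<le> d" and "d \<le> n"
  shows "chordal d (complete_clutter n d) \<and>
    (\<forall>es. simplicial_order d (complete_clutter n d) es \<longrightarrow>
      (\<forall>i. lambda_seq (complete_clutter n d) es i =
             (if 1 \<le> i \<and> i \<le> n - d + 1 then (n - 1 - i) choose (d - 2) else 0)))"
proof (intro conjI allI impI)
  show "chordal d (complete_clutter n d)" using chordal_complete_clutter[OF assms(1)] .
next
  fix es i assume es: "simplicial_order d (complete_clutter n d) es"
  show "lambda_seq (complete_clutter n d) es i =
          (if 1 \<le> i \<and> i \<le> n - d + 1 then (n - 1 - i) choose (d - 2) else 0)"
  proof (rule lambda_seq_eqI[OF order_refl _ es])
    show "1 \<le> d" using assms(1) by simp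
  next
    fix t assume "t \<in> {1..n}"
    then have "1 \<le> t" "d \<le> d - 1 + t" using assms(1) by auto
    then show "(\<Sum>i\<in>{1..n}. (if 1 \<le> i \<and> i \<le> n - d + 1 then (n - 1 - i) choose (d - 2) else 0)
                 * (i choose t)) = card (cliques d (complete_clutter n d) (d - 1 + t))"
      using complete_lambda_binomial_moment[OF assms \<open>1 \<le> t\<close>]
        card_cliques_complete_clutter[of d "d - 1 + t" n] assms(1) by simp
  qed (use assms in auto)
qed

end
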